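(* For infinitely many $n$, any randomized algorithm that, given a set $V$ of $n$ elements with pair weights $w$ accessible only through edge-weight queries (each query returns $w(uv)$ for one pair) and a target $c$, outputs the exact optimum value of diameter partitioning with success probability at least $2/3$ must make $\Omega(n^2)$ edge-weight queries in the worst case. This holds even when the weights form a metric taking only the values $1$ and $2$. The same statement holds for 2-MDCC in place of diameter partitioning.
   Context: For $S\subseteq V$, $\mathrm{diam}(S)=\max_{\{u,v\}\subseteq S}w(uv)$ with $\mathrm{diam}(S)=-\infty$ if $|S|\le1$. Diameter partitioning with target $c$: find the minimum over partitions $V=V_1\,\dot\cup\,V_2$ with $|V_1|=c$ of $\max\{\mathrm{diam}(V_1),\mathrm{diam}(V_2)\}$. 2-MDCC with target $c$: find the maximum over partitions $V=V_1\,\dot\cup\,V_2$ with $|V_1|=c$ of the minimum weight $w(uv)$ over pairs $\{u,v\}$ lying in the same class. *)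

theory Defs
  imports "HOL-Probability.Probability"
begin

text \<open>We represent w as a function nat => nat => real that is symmetric and
  canonically 0 outside the distinct pairs of {0..<n} (so that queries outside
  the instance reveal nothing).  The hard instances are required to use only
  weights 1 and 2 on distinct pairs (such weights automatically form a metric).\<close>

definition weights12 :: "nat \<Rightarrow> (nat \<Rightarrow> nat \<Rightarrow> real) set" where
  "weights12 n = {w. (\<forall>u v. w u v = w v u)
                    \<and> (\<forall>u v. (u = v \<or> u \<ge> n \<or> v \<ge> n) \<longrightarrow> w u v = 0)
                    \<and> (\<forall>u<n. \<forall>v<n. u \<noteq> v \<longrightarrow> w u v \<in> {1, 2})}"

definition diam :: "(nat \<Rightarrow> nat \<Rightarrow> real) \<Rightarrow> nat set \<Rightarrow> ereal" where
  "diam w S = (if card S \<le> 1 then -\<infinity>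
               else Max {ereal (w u v) | u v. u \<in> S \<and> v \<in> S \<and> u \<noteq> v})"

definition diam_partition :: "nat \<Rightarrow> nat \<Rightarrow> (nat \<Rightarrow> nat \<Rightarrow> real) \<Rightarrow> ereal" where
  "diam_partition n c w =
     (INF V1 \<in> {V1. V1 \<subseteq> {0..<n} \<and> card V1 = c}. max (diam w V1) (diam w ({0..<n} - V1)))"

definition mdcc2 :: "nat \<Rightarrow> nat \<Rightarrow> (nat \<Rightarrow> nat \<Rightarrow> real) \<Rightarrow> ereal" where
  "mdcc2 n c w =
     (SUP V1 \<in> {V1. V1 \<subseteq> {0..<n} \<and> card V1 = c}.
        INF p \<in> {(u, v). u < n \<and> v < n \<and> u \<noteq> v \<and> (u \<in> V1 \<longleftrightarrow> v \<in> V1)}. ereal (w (fst p) (snd p)))"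

datatype 'o qtree = Leaf 'o | Query "nat \<times> nat" "real \<Rightarrow> 'o qtree"

primrec run :: "'o qtree \<Rightarrow> (nat \<Rightarrow> nat \<Rightarrow> real) \<Rightarrow> 'o" where
  "run (Leaf x) w = x"
| "run (Query p f) w = run (f (w (fst p) (snd p))) w"

primrec num_queries :: "'o qtree \<Rightarrow> (nat \<Rightarrow> nat \<Rightarrow> real) \<Rightarrow> nat" where
  "num_queries (Leaf x) w = 0"
| "num_queries (Query p f) w = Suc (num_queries (f (w (fst p) (snd p))) w)"

text \<open>A randomized algorithm for instances of size n: a probability space M of
  random seeds and, for each target c and seed r, a deterministic query tree.\<close>

definition solves_whp ::
  "real measure \<Rightarrow> (nat \<Rightarrow> real \<Rightarrow> ereal qtree) \<Rightarrow>
   (nat \<Rightarrow> nat \<Rightarrow> (nat \<Rightarrow> nat \<Rightarrow> real) \<Rightarrow> ereal) \<Rightarrow> nat \<Rightarrow> bool" where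
  "solves_whp M A OPT n \<longleftrightarrow>
     (\<forall>c\<le>n. \<forall>w\<in>weights12 n.
        measure M {r \<in> space M. run (A c r) w = OPT n c w} \<ge> 2/3)"

definition quadratic_query_lower_bound ::
  "(nat \<Rightarrow> nat \<Rightarrow> (nat \<Rightarrow> nat \<Rightarrow> real) \<Rightarrow> ereal) \<Rightarrow> bool" where
  "quadratic_query_lower_bound OPT \<longleftrightarrow>
     (\<exists>\<delta>>0. \<forall>N. \<exists>n\<ge>N.
        \<forall>M A. prob_space M \<longrightarrow> solves_whp M A OPT n \<longrightarrow>
          (\<exists>c\<le>n. \<exists>w\<in>weights12 n. \<exists>r\<in>space M.
             real (num_queries (A c r) w) \<ge> \<delta> * real n ^ 2))"

end

theory Submission
  imports Defs
begin

(* Plant two clusters {0..<k} and {k..<2k}: pairs inside a cluster get weight lo, pairs across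
   get weight hi. With (lo, hi) = (1, 2) the optimal diameter partition with target k is the pair
   of clusters, of value 1; raising one inner pair to weight 2 makes every balanced partition
   contain a pair of weight 2 in one class. Symmetrically for 2-MDCC with (lo, hi) = (2, 1).
   An algorithm that is correct with probability 2/3 on the planted instance and on each of
   m perturbed ones is, for each perturbed pair e, correct on both with probability 1/3, and
   on such a seed it must query e while running on the planted instance. Summing over e, some
   seed queries at least m/3 pairs; taking m = n^2/16 perturbed pairs gives n^2/48 queries. *)

lemma (in prob_space) prob_Int_ge:
  assumes "A \<in> events" "B \<in> events"
  shows "prob A + prob B - 1 \<le> prob (A \<inter> B)"
proof -
  have "prob (A \<union> B) = prob A + prob B - prob (A \<inter> B)"
    using assms by (intro measure_Un3) (auto simp: fmeasurable_eq_sets)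
  moreover have "prob (A \<union> B) \<le> 1" by simp
  ultimately show ?thesis by linarith
qed

lemma (in prob_space) sum_prob_le_multiplicity:
  assumes "finite I" "\<And>i. i \<in> I \<Longrightarrow> X i \<in> events"
    and "\<And>x. x \<in> space M \<Longrightarrow> real (card {i\<in>I. x \<in> X i}) \<le> K"
  shows "(\<Sum>i\<in>I. prob (X i)) \<le> K"
proof -
  have integrable: "integrable M (indicator (X i) :: _ \<Rightarrow> real)" if "i \<in> I" for i
    using assms(2)[OF that] by (auto intro!: integrable_real_indicator simp: less_top[symmetric])
  have "(\<Sum>i\<in>I. prob (X i)) = (\<Sum>i\<in>I. integral\<^sup>L M (indicator (X i)))"
    using assms(2) by (intro sum.cong) auto
  also have "\<dots> = integral\<^sup>L M (\<lambda>x. \<Sum>i\<in>I. indicator (X i) x)"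
    using integrable by (rule Bochner_Integration.integral_sum[symmetric])
  also have "\<dots> \<le> integral\<^sup>L M (\<lambda>x. K)"
  proof (rule integral_mono)
    fix x assume "x \<in> space M"
    have "(\<Sum>i\<in>I. indicator (X i) x :: real) = real (card {i\<in>I. x \<in> X i})"
      using assms(1) by (simp add: sum.If_cases Int_def indicator_def)
    with assms(3)[OF \<open>x \<in> space M\<close>] show "(\<Sum>i\<in>I. indicator (X i) x) \<le> K" by simp
  qed (use integrable in auto)
  also have "\<dots> = K" by (simp add: prob_space)
  finally show ?thesis .
qed

abbreviation edge :: "nat \<Rightarrow> nat \<Rightarrow> nat \<times> nat" where
  "edge u v \<equiv> (min u v, max u v)"

primrec queried_edges :: "'o qtree \<Rightarrow> (nat \<Rightarrow> nat \<Rightarrow> real) \<Rightarrow> (nat \<times> nat) set" where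
  "queried_edges (Leaf x) w = {}"
| "queried_edges (Query p f) w =
     insert (edge (fst p) (snd p)) (queried_edges (f (w (fst p) (snd p))) w)"

lemma finite_queried_edges: "finite (queried_edges T w)"
  by (induction T) auto

lemma card_queried_edges_le: "card (queried_edges T w) \<le> num_queries T w"
proof (induction T)
  case (Query p f)
  then show ?case by (simp add: card_insert_if finite_queried_edges le_SucI)
qed simp

lemma run_eq_if_edge_not_queried:
  assumes "\<And>u v. edge u v \<noteq> e \<Longrightarrow> w' u v = w u v" and "e \<notin> queried_edges T w"
  shows "run T w' = run T w"
  using assms(2) by (induction T) (auto simp: assms(1))

lemma exists_seed_with_many_queries:
  fixes OPT :: "nat \<Rightarrow> nat \<Rightarrow> (nat \<Rightarrow> nat \<Rightarrow> real) \<Rightarrow> ereal"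
  assumes "prob_space M" and solves: "solves_whp M A OPT n"
    and "c \<le> n" and w: "w \<in> weights12 n" and "finite E"
    and W: "\<And>e. e \<in> E \<Longrightarrow> W e \<in> weights12 n"
    and sensitive: "\<And>e. e \<in> E \<Longrightarrow> OPT n c (W e) \<noteq> OPT n c w"
    and local: "\<And>e u v. e \<in> E \<Longrightarrow> edge u v \<noteq> e \<Longrightarrow> W e u v = w u v"
  shows "\<exists>r\<in>space M. real (card E) / 3 \<le> real (num_queries (A c r) w)"
proof (rule ccontr)
  interpret prob_space M by fact
  assume "\<not> ?thesis"
  then have few: "3 * num_queries (A c r) w < card E" if "r \<in> space M" for r
    using that by force
  define correct where "correct w' = {r \<in> space M. run (A c r) w' = OPT n c w'}" for w'
  have prob_correct: "2/3 \<le> prob (correct w')" if "w' \<in> weights12 n" for w'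
    using solves \<open>c \<le> n\<close> that unfolding solves_whp_def correct_def by blast
  \<comment> \<open>\<open>solves_whp\<close> does not demand measurability, but a non-event has measure 0.\<close>
  have correct_event: "correct w' \<in> events" if "w' \<in> weights12 n" for w'
    using prob_correct[OF that] measure_notin_sets[of "correct w'" M] by fastforce
  define both where "both e = correct w \<inter> correct (W e)" for e
  have "(\<Sum>e\<in>E. 1/3) \<le> (\<Sum>e\<in>E. prob (both e))"
  proof (rule sum_mono)
    fix e assume "e \<in> E"
    then show "1/3 \<le> prob (both e)"
      using prob_Int_ge[OF correct_event[OF w] correct_event[OF W]]
        prob_correct[OF w] prob_correct[OF W] unfolding both_def by fastforce
  qed
  also have "\<dots> \<le> (real (card E) - 1) / 3"
  proof (rule sum_prob_le_multiplicity[OF \<open>finite E\<close>])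
    show "both e \<in> events" if "e \<in> E" for e
      unfolding both_def using correct_event w W[OF that] by blast
    fix r assume r: "r \<in> space M"
    have "{e\<in>E. r \<in> both e} \<subseteq> queried_edges (A c r) w"
    proof safe
      fix e assume "e \<in> E" "r \<in> both e"
      then have "run (A c r) (W e) \<noteq> run (A c r) w"
        using sensitive unfolding both_def correct_def by auto
      then show "e \<in> queried_edges (A c r) w"
        using run_eq_if_edge_not_queried local[OF \<open>e \<in> E\<close>] by blast
    qed
    then have "card {e\<in>E. r \<in> both e} \<le> num_queries (A c r) w"
      by (meson card_mono card_queried_edges_le finite_queried_edges le_trans)
    with few[OF r] have "real (3 * card {e\<in>E. r \<in> both e} + 1) \<le> real (card E)"
      by (intro of_nat_mono) linarith
    then show "real (card {e\<in>E. r \<in> both e}) \<le> (real (card E) - 1) / 3"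
      by simp
  qed
  finally show False by simp
qed

definition two_clusters ::
  "nat \<Rightarrow> real \<Rightarrow> real \<Rightarrow> (nat \<times> nat) set \<Rightarrow> nat \<Rightarrow> nat \<Rightarrow> real" where
  "two_clusters k lo hi F u v =
     (if u = v \<or> u \<ge> 2*k \<or> v \<ge> 2*k then 0
      else if (u < k \<longleftrightarrow> v < k) \<and> edge u v \<notin> F then lo else hi)"

lemma two_clusters_weights12:
  "lo \<in> {1, 2} \<Longrightarrow> hi \<in> {1, 2} \<Longrightarrow> two_clusters k lo hi F \<in> weights12 (2*k)"
  unfolding weights12_def two_clusters_def by (auto simp: min.commute max.commute)

lemma two_clusters_insert_eq:
  "edge u v \<noteq> e \<Longrightarrow> two_clusters k lo hi (insert e F) u v = two_clusters k lo hi F u v"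
  unfolding two_clusters_def by auto

lemma balanced_split_has_raised_pair:
  assumes "V1 \<subseteq> {0..<2*k}" "card V1 = k" "a < b" "b < k"
  obtains x y where "x \<noteq> y" "x < 2*k" "y < 2*k" "x \<in> V1 \<longleftrightarrow> y \<in> V1"
    "two_clusters k lo hi {(a, b)} x y = hi"
proof (cases "a \<in> V1 \<longleftrightarrow> b \<in> V1")
  case True
  with assms show ?thesis by (intro that[of a b]) (auto simp: two_clusters_def)
next
  case False
  then obtain x where x: "x \<in> V1" "x < k" using assms by (metis order.strict_trans)
  have "V1 \<noteq> {0..<k}" using False assms by auto
  then have "\<not> V1 \<subseteq> {0..<k}"
    using assms by (metis card_atLeastLessThan card_subset_eq finite_atLeastLessThan diff_zero)
  then obtain y where "y \<in> V1" "k \<le> y" by (auto simp: subset_iff not_less)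
  with x assms show ?thesis by (intro that[of x y]) (auto simp: two_clusters_def)
qed

lemma finite_pair_weights:
  "finite S \<Longrightarrow> finite {ereal (w u v) | u v. u \<in> S \<and> v \<in> S \<and> u \<noteq> v}"
  by (rule finite_subset[of _ "(\<lambda>(u, v). ereal (w u v)) ` (S \<times> S)"]) auto

lemma diam_le:
  assumes "finite S" "\<And>u v. u \<in> S \<Longrightarrow> v \<in> S \<Longrightarrow> u \<noteq> v \<Longrightarrow> w u v \<le> t"
  shows "diam w S \<le> ereal t"
proof (cases "card S \<le> 1")
  case False
  then have "{ereal (w u v) | u v. u \<in> S \<and> v \<in> S \<and> u \<noteq> v} \<noteq> {}"
    using assms(1) by (auto simp: card_le_Suc0_iff_eq)
  with False assms finite_pair_weights[OF assms(1)] show ?thesis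
    unfolding diam_def by (auto simp: Max_le_iff)
qed (simp add: diam_def)

lemma diam_ge:
  assumes "finite S" "u \<in> S" "v \<in> S" "u \<noteq> v"
  shows "ereal (w u v) \<le> diam w S"
proof -
  have "\<not> card S \<le> 1"
    using assms card_mono[of S "{u, v}"] by auto
  with assms finite_pair_weights[OF assms(1)] show ?thesis
    unfolding diam_def by (auto intro!: Max_ge)
qed

lemma diam_partition_two_clusters_le_one:
  "diam_partition (2*k) k (two_clusters k 1 2 {}) \<le> 1"
proof -
  have "diam_partition (2*k) k (two_clusters k 1 2 {})
      \<le> max (diam (two_clusters k 1 2 {}) {0..<k})
              (diam (two_clusters k 1 2 {}) ({0..<2*k} - {0..<k}))"
    unfolding diam_partition_def by (rule INF_lower) auto
  also have "\<dots> \<le> 1"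
    using diam_le[of "{0..<k}" "two_clusters k 1 2 {}" 1]
      diam_le[of "{0..<2*k} - {0..<k}" "two_clusters k 1 2 {}" 1]
    by (auto simp: two_clusters_def one_ereal_def)
  finally show ?thesis .
qed

lemma diam_partition_two_clusters_raised_ge_two:
  assumes "a < b" "b < k"
  shows "2 \<le> diam_partition (2*k) k (two_clusters k 1 2 {(a, b)})"
  unfolding diam_partition_def
proof (rule INF_greatest)
  fix V1 assume "V1 \<in> {V1. V1 \<subseteq> {0..<2*k} \<and> card V1 = k}"
  then have V1: "V1 \<subseteq> {0..<2*k}" "card V1 = k" by auto
  then obtain x y where xy: "x \<noteq> y" "x < 2*k" "y < 2*k" "x \<in> V1 \<longleftrightarrow> y \<in> V1"
    "two_clusters k 1 2 {(a, b)} x y = 2"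
    using balanced_split_has_raised_pair[of V1 k a b] assms by metis
  have "finite V1" using V1 finite_subset by blast
  then show "2 \<le> max (diam (two_clusters k 1 2 {(a, b)}) V1)
                      (diam (two_clusters k 1 2 {(a, b)}) ({0..<2*k} - V1))"
    using xy diam_ge[of V1 x y "two_clusters k 1 2 {(a, b)}"]
      diam_ge[of "{0..<2*k} - V1" x y "two_clusters k 1 2 {(a, b)}"]
    by (cases "x \<in> V1") (auto simp: le_max_iff_disj)
qed

lemma mdcc2_two_clusters_ge_two: "2 \<le> mdcc2 (2*k) k (two_clusters k 2 1 {})"
  unfolding mdcc2_def
  by (rule SUP_upper2[of "{0..<k}"]) (auto intro!: INF_greatest simp: two_clusters_def)

lemma mdcc2_two_clusters_raised_le_one:
  assumes "a < b" "b < k"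
  shows "mdcc2 (2*k) k (two_clusters k 2 1 {(a, b)}) \<le> 1"
  unfolding mdcc2_def
proof (rule SUP_least)
  fix V1 assume "V1 \<in> {V1. V1 \<subseteq> {0..<2*k} \<and> card V1 = k}"
  then have "V1 \<subseteq> {0..<2*k}" "card V1 = k" by auto
  then obtain x y where "x \<noteq> y" "x < 2*k" "y < 2*k" "x \<in> V1 \<longleftrightarrow> y \<in> V1"
    "two_clusters k 2 1 {(a, b)} x y = 1"
    using balanced_split_has_raised_pair[of V1 k a b] assms by metis
  then show "(INF p\<in>{(u, v). u < 2*k \<and> v < 2*k \<and> u \<noteq> v \<and> (u \<in> V1 \<longleftrightarrow> v \<in> V1)}.
                ereal (two_clusters k 2 1 {(a, b)} (fst p) (snd p))) \<le> 1"
    by (intro INF_lower2[of "(x, y)"]) auto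
qed

lemma quadratic_query_lower_bound_if_sensitive:
  assumes lo_hi: "lo \<in> {1, 2}" "hi \<in> {1, 2}"
    and sensitive: "\<And>k a b. a < b \<Longrightarrow> b < k \<Longrightarrow>
      OPT (2*k) k (two_clusters k lo hi {(a, b)}) \<noteq> OPT (2*k) k (two_clusters k lo hi {})"
  shows "quadratic_query_lower_bound OPT"
  unfolding quadratic_query_lower_bound_def
proof (intro exI[of _ "1/48"] conjI allI)
  fix N :: nat
  define h where "h = Suc N"
  define E where "E = {0..<h} \<times> {h..<2*h}"
  define planted where "planted = two_clusters (2*h) lo hi {}"
  have planted: "planted \<in> weights12 (2*(2*h))"
    unfolding planted_def using two_clusters_weights12 lo_hi by blast
  have card_E: "real (card E) / 3 = 1/48 * real (2*(2*h)) ^ 2"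
    by (simp add: E_def power2_eq_square)
  show "\<exists>n\<ge>N. \<forall>M A. prob_space M \<longrightarrow> solves_whp M A OPT n \<longrightarrow>
          (\<exists>c\<le>n. \<exists>w\<in>weights12 n. \<exists>r\<in>space M. 1/48 * real n ^ 2 \<le> real (num_queries (A c r) w))"
  proof (rule exI[of _ "2*(2*h)"], intro conjI allI impI)
    fix M A assume M: "prob_space M" and solves: "solves_whp M A OPT (2*(2*h))"
    have "\<exists>r\<in>space M. real (card E) / 3 \<le> real (num_queries (A (2*h) r) planted)"
    proof (rule exists_seed_with_many_queries[OF M solves _ planted,
          where W = "\<lambda>e. two_clusters (2*h) lo hi {e}"])
      fix e assume "e \<in> E"
      then obtain a b where "e = (a, b)" "a < b" "b < 2*h" by (auto simp: E_def)
      then show "OPT (2*(2*h)) (2*h) (two_clusters (2*h) lo hi {e})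
                 \<noteq> OPT (2*(2*h)) (2*h) planted"
        unfolding planted_def using sensitive by blast
    next
      show "\<And>e. two_clusters (2*h) lo hi {e} \<in> weights12 (2*(2*h))"
        using two_clusters_weights12 lo_hi by blast
      show "\<And>e u v. edge u v \<noteq> e \<Longrightarrow> two_clusters (2*h) lo hi {e} u v = planted u v"
        unfolding planted_def by (rule two_clusters_insert_eq)
    qed (auto simp: E_def)
    with card_E planted show "\<exists>c\<le>2*(2*h). \<exists>w\<in>weights12 (2*(2*h)). \<exists>r\<in>space M.
                 1/48 * real (2*(2*h)) ^ 2 \<le> real (num_queries (A c r) w)"
      by (intro exI[of _ "2*h"]) auto
  qed (simp add: h_def)
qed simp

theorem theorem6:
  shows "quadratic_query_lower_bound diam_partition \<and> quadratic_query_lower_bound mdcc2"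
proof
  have separated: "x \<le> 1 \<Longrightarrow> 2 \<le> y \<Longrightarrow> x \<noteq> y" for x y :: ereal
  proof
    assume "x \<le> 1" "2 \<le> y" "x = y"
    then have "(2::ereal) \<le> 1" using order.trans by blast
    then show False by simp
  qed
  show "quadratic_query_lower_bound diam_partition"
    by (rule quadratic_query_lower_bound_if_sensitive[of 1 2])
      (simp_all add: separated[OF diam_partition_two_clusters_le_one
                                  diam_partition_two_clusters_raised_ge_two, THEN not_sym])
  show "quadratic_query_lower_bound mdcc2"
    by (rule quadratic_query_lower_bound_if_sensitive[of 2 1])
      (simp_all add: separated[OF mdcc2_two_clusters_raised_le_one mdcc2_two_clusters_ge_two])
qed

end
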